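(* Let $([v_{ij}:v_{ji}])$ be common lines data for planes $P_1,\dots,P_N$ and fix a triple $(i,j,k)$ of distinct indices that strictly satisfies the spherical triangle inequalities. Then there exist frames $F_i,F_j,F_k$ in generic position which realize the common line pairs $[v_{ij}:v_{ji}]$, $[v_{ik}:v_{ki}]$, $[v_{jk}:v_{kj}]$, i.e. $\iota_i(v_{ij})=\iota_j(v_{ji})$, $\iota_i(v_{ik})=\iota_k(v_{ki})$, $\iota_j(v_{jk})=\iota_k(v_{kj})$. Moreover, if $G_i,G_j,G_k$ are any other frames realizing these same three pairs, then there is $A\in\mathrm O(3)$ with $(AF_i,AF_j,AF_k)=(G_i,G_j,G_k)$.
   Context: A frame is an ordered pair $(a,b)$ of orthonormal vectors in $\mathbb R^3$. Planes $P_1=\dots=P_N=\mathbb R^2$; a frame $F_i=(a_i,b_i)$ gives the embedding $\iota_i:P_i\to\mathbb R^3$, $\iota_i(x,y)=xa_i+yb_i$. Frames are in generic position if their planes $\iota(P)$ are pairwise distinct and the pairwise intersection lines are pairwise distinct. $\mathrm O(3)$ is the group of all $3\times3$ orthogonal matrices, acting on frames by $A(a,b)=(Aa,Ab)$. Common lines data is a collection $([v_{ij}:v_{ji}])_{1\le i<j\le N}$ of elements of $\mathbb P(P_i\times P_j)$ (nonzero pairs $(v_{ij},v_{ji})\in\mathbb R^2\times\mathbb R^2$ up to nonzero scaling) with $\|v_{ij}\|^2=\|v_{ji}\|^2$; indices of a pair may be written in either order. For a triple $(i,j,k)$ and chosen representatives set $\alpha_{ijk}=\cos^{-1}\frac{v_{ij}\cdot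 v_{ik}}{\|v_{ij}\|\|v_{ik}\|}$, $\beta_{ijk}=\cos^{-1}\frac{v_{ji}\cdot v_{jk}}{\|v_{ji}\|\|v_{jk}\|}$, $\gamma_{ijk}=\cos^{-1}\frac{v_{ki}\cdot v_{kj}}{\|v_{ki}\|\|v_{kj}\|}$. The triple strictly satisfies the spherical triangle inequalities if for any choice of representatives $\beta+\gamma>\alpha$, $\alpha+\gamma>\beta$, $\alpha+\beta>\gamma$, $\alpha+\beta+\gamma<2\pi$ (with $\alpha=\alpha_{ijk}$ etc.). *)

theory Defs
  imports "HOL-Analysis.Analysis"
begin

text \<open>Planes P_i = R^2 are modelled as real^2, ambient space R^3 as real^3.
  A frame is a pair (a,b) of orthonormal vectors in R^3.\<close>

type_synonym frame = "(real^3) \<times> (real^3)"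

definition is_frame :: "frame \<Rightarrow> bool" where
  "is_frame F \<longleftrightarrow> norm (fst F) = 1 \<and> norm (snd F) = 1 \<and> fst F \<bullet> snd F = 0"

definition iota :: "frame \<Rightarrow> real^2 \<Rightarrow> real^3" where
  "iota F p = (p$1) *\<^sub>R fst F + (p$2) *\<^sub>R snd F"

definition frame_plane :: "frame \<Rightarrow> (real^3) set" where
  "frame_plane F = range (iota F)"

definition generic_position :: "nat set \<Rightarrow> (nat \<Rightarrow> frame) \<Rightarrow> bool" where
  "generic_position I F \<longleftrightarrow>
     (\<forall>a\<in>I. \<forall>b\<in>I. a \<noteq> b \<longrightarrow> frame_plane (F a) \<noteq> frame_plane (F b)) \<and>
     (\<forall>a\<in>I. \<forall>b\<in>I. \<forall>c\<in>I. \<forall>d\<in>I. a \<noteq> b \<longrightarrow> c \<noteq> d \<longrightarrow> {a, b} \<noteq> {c, d} \<longrightarrow>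
        frame_plane (F a) \<inter> frame_plane (F b) \<noteq> frame_plane (F c) \<inter> frame_plane (F d))"

definition frame_act :: "real^3^3 \<Rightarrow> frame \<Rightarrow> frame" where
  "frame_act A F = (A *v fst F, A *v snd F)"

text \<open>Common lines data for planes P_1..P_N: v a b is the component v_ab of a chosen
  representative (v_ab, v_ba) of the class [v_ab : v_ba]; the pair is nonzero and
  both components have the same norm.\<close>
definition common_lines_data :: "nat \<Rightarrow> (nat \<Rightarrow> nat \<Rightarrow> real^2) \<Rightarrow> bool" where
  "common_lines_data N v \<longleftrightarrow>
     (\<forall>a\<in>{1..N}. \<forall>b\<in>{1..N}. a \<noteq> b \<longrightarrow>
        (v a b \<noteq> 0 \<or> v b a \<noteq> 0) \<and> norm (v a b) ^ 2 = norm (v b a) ^ 2)"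

definition vangle :: "real^2 \<Rightarrow> real^2 \<Rightarrow> real" where
  "vangle u w = arccos ((u \<bullet> w) / (norm u * norm w))"

text \<open>Strict spherical triangle inequalities for the triple (i,j,k), for every choice of
  representatives: the pair for {i,j} is rescaled by s, for {i,k} by t, for {j,k} by u.\<close>
definition strict_spherical_triangle ::
  "(nat \<Rightarrow> nat \<Rightarrow> real^2) \<Rightarrow> nat \<Rightarrow> nat \<Rightarrow> nat \<Rightarrow> bool" where
  "strict_spherical_triangle v i j k \<longleftrightarrow>
     (\<forall>s t u :: real. s \<noteq> 0 \<longrightarrow> t \<noteq> 0 \<longrightarrow> u \<noteq> 0 \<longrightarrow>
       (let \<alpha> = vangle (s *\<^sub>R v i j) (t *\<^sub>R v i k);
            \<beta> = vangle (s *\<^sub>R v j i) (u *\<^sub>R v j k);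
            \<gamma> = vangle (t *\<^sub>R v k i) (u *\<^sub>R v k j)
        in \<beta> + \<gamma> > \<alpha> \<and> \<alpha> + \<gamma> > \<beta> \<and> \<alpha> + \<beta> > \<gamma> \<and> \<alpha> + \<beta> + \<gamma> < 2 * pi))"

definition realizes_pair :: "(nat \<Rightarrow> frame) \<Rightarrow> (nat \<Rightarrow> nat \<Rightarrow> real^2) \<Rightarrow> nat \<Rightarrow> nat \<Rightarrow> bool" where
  "realizes_pair F v a b \<longleftrightarrow> iota (F a) (v a b) = iota (F b) (v b a)"

end

theory Submission
  imports Defs
begin

text \<open>Place the three common lines as vectors \<open>L\<^sub>1, L\<^sub>2, L\<^sub>3\<close> in \<open>\<real>\<^sup>3\<close> with the
  prescribed lengths and pairwise angles \<open>\<alpha>, \<beta>, \<gamma>\<close>: the strict spherical triangle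
  inequalities are exactly what makes this possible with \<open>L\<^sub>1, L\<^sub>2, L\<^sub>3\<close> linearly
  independent. Since \<open>0 < \<alpha>, \<beta>, \<gamma> < \<pi>\<close>, the two common lines in each plane are
  independent, so each frame is determined by where it sends them. Independence of the
  \<open>L\<^sub>m\<close> makes the three planes and their intersection lines distinct, and any other
  realization has common lines with the same Gram matrix, hence differs by the orthogonal
  map carrying one triple of common lines onto the other.\<close>

definition det2 :: "real^2 \<Rightarrow> real^2 \<Rightarrow> real" where
  "det2 p q = p$1 * q$2 - p$2 * q$1"

lemma inner_vec2: "(p::real^2) \<bullet> q = p$1 * q$1 + p$2 * q$2"
  by (simp add: inner_vec_def sum_2)

lemma inner_vec3: "(p::real^3) \<bullet> q = p$1 * q$1 + p$2 * q$2 + p$3 * q$3"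
  by (simp add: inner_vec_def sum_3)

lemma inner_square_add_det2_square: "(p \<bullet> q)^2 + (det2 p q)^2 = (p \<bullet> p) * (q \<bullet> q)"
  by (simp add: inner_vec2 det2_def power2_eq_square algebra_simps)

lemma
  assumes "u \<noteq> 0" "w \<noteq> 0"
  shows vangle_nonneg: "0 \<le> vangle u w" and vangle_le_pi: "vangle u w \<le> pi"
    and cos_vangle: "cos (vangle u w) * (norm u * norm w) = u \<bullet> w"
proof -
  have pos: "norm u * norm w > 0" using assms by simp
  have "\<bar>u \<bullet> w\<bar> \<le> norm u * norm w" by (rule Cauchy_Schwarz_ineq2)
  hence "-1 \<le> (u \<bullet> w) / (norm u * norm w)" "(u \<bullet> w) / (norm u * norm w) \<le> 1"
    using pos by (auto simp: divide_simps abs_le_iff)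
  thus "0 \<le> vangle u w" "vangle u w \<le> pi" "cos (vangle u w) * (norm u * norm w) = u \<bullet> w"
    using pos by (simp_all add: vangle_def arccos_lbound arccos_ubound cos_arccos)
qed

lemma det2_neq_0_if_vangle_strict:
  assumes "u \<noteq> 0" "w \<noteq> 0" "0 < vangle u w" "vangle u w < pi"
  shows "det2 u w \<noteq> 0"
proof
  assume "det2 u w = 0"
  hence "(u \<bullet> w)^2 = (norm u * norm w)^2"
    using inner_square_add_det2_square[of u w]
    by (simp add: power2_norm_eq_inner[symmetric] power_mult_distrib)
  moreover have "(cos (vangle u w) * (norm u * norm w))^2 = (u \<bullet> w)^2"
    using cos_vangle[OF assms(1,2)] by simp
  ultimately have "(cos (vangle u w))^2 = 1"
    using assms(1,2) by (simp add: power_mult_distrib)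
  hence "(sin (vangle u w))^2 = 0" by (simp add: sin_squared_eq)
  thus False using assms(3,4) sin_gt_zero by fastforce
qed

lemma frame_plane_in_span_pair:
  assumes "det2 p q \<noteq> 0" "x \<in> frame_plane F"
  shows "\<exists>s t. x = s *\<^sub>R iota F p + t *\<^sub>R iota F q"
proof -
  obtain z where "x = iota F z" using assms(2) unfolding frame_plane_def by blast
  moreover have "iota F z = (det2 z q / det2 p q) *\<^sub>R iota F p + (det2 p z / det2 p q) *\<^sub>R iota F q"
  proof -
    have "det2 p q *\<^sub>R iota F z = det2 z q *\<^sub>R iota F p + det2 p z *\<^sub>R iota F q"
      unfolding iota_def det2_def by (simp add: algebra_simps)
    hence "iota F z = (1 / det2 p q) *\<^sub>R (det2 z q *\<^sub>R iota F p + det2 p z *\<^sub>R iota F q)"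
      using assms(1) by (simp flip: \<open>det2 p q *\<^sub>R iota F z = _\<close>)
    thus ?thesis by (simp add: scaleR_add_right)
  qed
  ultimately show ?thesis by blast
qed

lemma inner_iota:
  assumes "is_frame F"
  shows "iota F p \<bullet> iota F q = p \<bullet> q"
proof -
  have "fst F \<bullet> fst F = 1" "snd F \<bullet> snd F = 1" "fst F \<bullet> snd F = 0" "snd F \<bullet> fst F = 0"
    using assms unfolding is_frame_def by (auto simp: norm_eq_1 inner_commute)
  thus ?thesis
    by (simp add: iota_def inner_vec2 inner_add_left inner_add_right algebra_simps)
qed

lemma iota_frame_act: "iota (frame_act A F) z = A *v iota F z"
  by (simp add: iota_def frame_act_def matrix_vector_right_distrib matrix_vector_mult_scaleR)

lemma frame_eq_if_iota_eq:
  assumes "det2 p q \<noteq> 0" "iota F p = iota G p" "iota F q = iota G q"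
  shows "F = G"
proof -
  define X where "X = fst F - fst G"
  define Y where "Y = snd F - snd G"
  have p: "p$1 *\<^sub>R X + p$2 *\<^sub>R Y = 0" and q: "q$1 *\<^sub>R X + q$2 *\<^sub>R Y = 0"
    using assms(2,3) unfolding X_def Y_def iota_def by (simp_all add: algebra_simps)
  have "det2 p q *\<^sub>R X = q$2 *\<^sub>R (p$1 *\<^sub>R X + p$2 *\<^sub>R Y) - p$2 *\<^sub>R (q$1 *\<^sub>R X + q$2 *\<^sub>R Y)"
    and "det2 p q *\<^sub>R Y = p$1 *\<^sub>R (q$1 *\<^sub>R X + q$2 *\<^sub>R Y) - q$1 *\<^sub>R (p$1 *\<^sub>R X + p$2 *\<^sub>R Y)"
    by (simp_all add: det2_def algebra_simps)
  hence "det2 p q *\<^sub>R X = 0" "det2 p q *\<^sub>R Y = 0"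
    by (simp_all only: p q scaleR_zero_right diff_self)
  hence "X = 0" "Y = 0" using assms(1) by simp_all
  thus ?thesis unfolding X_def Y_def by (simp add: prod_eq_iff)
qed

text \<open>\<open>A\<close> and \<open>B\<close> are the images of the standard basis under the linear map sending
  \<open>p, q\<close> to \<open>P, Q\<close> (Cramer's rule).\<close>
lemma frame_with_images:
  assumes d: "det2 p q \<noteq> 0"
    and PP: "P \<bullet> P = p \<bullet> p" and QQ: "Q \<bullet> Q = q \<bullet> q" and PQ: "P \<bullet> Q = p \<bullet> q"
  obtains F where "is_frame F" "iota F p = P" "iota F q = Q"
proof
  define d where "d = det2 p q"
  define A where "A = (1/d) *\<^sub>R (q$2 *\<^sub>R P - p$2 *\<^sub>R Q)"
  define B where "B = (1/d) *\<^sub>R (p$1 *\<^sub>R Q - q$1 *\<^sub>R P)"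
  have "d \<noteq> 0" using assms d_def by simp
  have QP: "Q \<bullet> P = p \<bullet> q" using PQ by (simp add: inner_commute)
  have "A \<bullet> A = (1/d)^2 * ((q$2)^2 * (p \<bullet> p) - 2 * q$2 * p$2 * (p \<bullet> q) + (p$2)^2 * (q \<bullet> q))"
    and "B \<bullet> B = (1/d)^2 * ((p$1)^2 * (q \<bullet> q) - 2 * q$1 * p$1 * (p \<bullet> q) + (q$1)^2 * (p \<bullet> p))"
    and "A \<bullet> B = (1/d)^2 * ((q$2 * p$1 + p$2 * q$1) * (p \<bullet> q) - q$2 * q$1 * (p \<bullet> p) - p$2 * p$1 * (q \<bullet> q))"
    unfolding A_def B_def
    by (simp_all add: inner_diff_left inner_diff_right PP QQ PQ QP power2_eq_square algebra_simps)
  hence "A \<bullet> A = (1/d)^2 * d^2" "B \<bullet> B = (1/d)^2 * d^2" "A \<bullet> B = 0"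
    by (simp_all add: inner_vec2 d_def det2_def power2_eq_square algebra_simps)
  thus "is_frame (A, B)"
    using \<open>d \<noteq> 0\<close> by (simp add: is_frame_def norm_eq_1 power2_eq_square)
  have "iota (A, B) p = (1/d) *\<^sub>R (d *\<^sub>R P)" "iota (A, B) q = (1/d) *\<^sub>R (d *\<^sub>R Q)"
    unfolding iota_def A_def B_def d_def det2_def by (simp_all add: algebra_simps)
  thus "iota (A, B) p = P" "iota (A, B) q = Q"
    using \<open>d \<noteq> 0\<close> by simp_all
qed

definition mat_of_cols3 :: "real^3 \<Rightarrow> real^3 \<Rightarrow> real^3 \<Rightarrow> real^3^3" where
  "mat_of_cols3 X1 X2 X3 = (\<chi> r c. (if c = 1 then X1 else if c = 2 then X2 else X3) $ r)"

lemma mat_of_cols3_mult_vec: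
  "mat_of_cols3 X1 X2 X3 *v x = x$1 *\<^sub>R X1 + x$2 *\<^sub>R X2 + x$3 *\<^sub>R X3"
  by (simp add: vec_eq_iff matrix_vector_mult_def mat_of_cols3_def sum_3 algebra_simps)

lemma matrix_mul_mat_of_cols3:
  "A ** mat_of_cols3 X1 X2 X3 = mat_of_cols3 (A *v X1) (A *v X2) (A *v X3)"
  by (simp add: vec_eq_iff matrix_matrix_mult_def matrix_vector_mult_def mat_of_cols3_def)

lemma mat_of_cols3_eq_iff:
  "mat_of_cols3 X1 X2 X3 = mat_of_cols3 Y1 Y2 Y3 \<longleftrightarrow> X1 = Y1 \<and> X2 = Y2 \<and> X3 = Y3"
proof
  have "mat_of_cols3 X1 X2 X3 *v axis 1 1 = X1" "mat_of_cols3 X1 X2 X3 *v axis 2 1 = X2"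
    "mat_of_cols3 X1 X2 X3 *v axis 3 1 = X3" for X1 X2 X3
    by (simp_all add: mat_of_cols3_mult_vec axis_def)
  thus "mat_of_cols3 X1 X2 X3 = mat_of_cols3 Y1 Y2 Y3 \<Longrightarrow> X1 = Y1 \<and> X2 = Y2 \<and> X3 = Y3"
    by metis
qed simp

lemma transpose_mat_of_cols3_mult:
  "transpose (mat_of_cols3 X1 X2 X3) ** mat_of_cols3 X1 X2 X3 =
     (\<chi> r c. (if r = 1 then X1 else if r = 2 then X2 else X3) \<bullet> (if c = 1 then X1 else if c = 2 then X2 else X3))"
  by (simp add: vec_eq_iff matrix_matrix_mult_def transpose_def mat_of_cols3_def inner_vec3 sum_3)

lemma mat_of_cols3_invertible_independent:
  assumes "invertible (mat_of_cols3 X1 X2 X3)" "s *\<^sub>R X1 + t *\<^sub>R X2 + u *\<^sub>R X3 = 0"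
  shows "s = 0 \<and> t = 0 \<and> u = 0"
proof -
  have "mat_of_cols3 X1 X2 X3 *v vector [s, t, u] = 0"
    using assms(2) by (simp add: mat_of_cols3_mult_vec)
  hence "(vector [s, t, u] :: real^3) = 0"
    using assms(1) by (metis invertible_left_inverse matrix_left_invertible_ker)
  thus ?thesis by (simp add: vec_eq_iff forall_3)
qed

text \<open>With equal Gram matrices, \<open>Y X\<^sup>-\<^sup>1\<close> is orthogonal.\<close>
lemma orthogonal_matrix_of_equal_gram:
  fixes X Y :: "real^'n^'n"
  assumes "invertible X" and gram: "transpose Y ** Y = transpose X ** X"
  obtains A where "orthogonal_matrix A" "A ** X = Y"
proof -
  obtain X' where X': "X ** X' = mat 1" "X' ** X = mat 1"
    using assms(1) unfolding invertible_def by blast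
  have "transpose (Y ** X') ** (Y ** X') = transpose X' ** (transpose Y ** Y) ** X'"
    by (simp add: matrix_transpose_mul matrix_mul_assoc)
  also have "\<dots> = transpose (X ** X') ** (X ** X')"
    by (simp add: gram matrix_transpose_mul matrix_mul_assoc)
  finally have "orthogonal_matrix (Y ** X')"
    by (simp add: X' transpose_mat orthogonal_matrix)
  moreover have "Y ** X' ** X = Y"
    by (simp add: X' flip: matrix_mul_assoc)
  ultimately show ?thesis by (rule that)
qed

lemma orthogonal_matrix_of_equal_gram3:
  assumes "invertible (mat_of_cols3 X1 X2 X3)"
    and "Y1 \<bullet> Y1 = X1 \<bullet> X1" "Y2 \<bullet> Y2 = X2 \<bullet> X2" "Y3 \<bullet> Y3 = X3 \<bullet> X3"
    and "Y1 \<bullet> Y2 = X1 \<bullet> X2" "Y1 \<bullet> Y3 = X1 \<bullet> X3" "Y2 \<bullet> Y3 = X2 \<bullet> X3"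
  obtains A where "orthogonal_matrix A" "A *v X1 = Y1" "A *v X2 = Y2" "A *v X3 = Y3"
proof -
  have "transpose (mat_of_cols3 Y1 Y2 Y3) ** mat_of_cols3 Y1 Y2 Y3 =
        transpose (mat_of_cols3 X1 X2 X3) ** mat_of_cols3 X1 X2 X3"
    using assms(2-) by (simp add: transpose_mat_of_cols3_mult vec_eq_iff forall_3 inner_commute)
  with assms(1) obtain A where "orthogonal_matrix A" "A ** mat_of_cols3 X1 X2 X3 = mat_of_cols3 Y1 Y2 Y3"
    by (rule orthogonal_matrix_of_equal_gram)
  thus ?thesis using that by (simp add: matrix_mul_mat_of_cols3 mat_of_cols3_eq_iff)
qed

lemma spherical_triangle_cos_bound:
  fixes \<alpha> \<beta> \<gamma> :: real
  assumes "0 \<le> \<alpha>" "\<alpha> \<le> pi" "0 \<le> \<beta>" "\<beta> \<le> pi" "0 \<le> \<gamma>" "\<gamma> \<le> pi"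
    and "\<beta> + \<gamma> > \<alpha>" "\<alpha> + \<gamma> > \<beta>" "\<alpha> + \<beta> > \<gamma>" "\<alpha> + \<beta> + \<gamma> < 2 * pi"
  shows "\<bar>cos \<gamma> - cos \<alpha> * cos \<beta>\<bar> < sin \<alpha> * sin \<beta>"
proof -
  have "cos \<gamma> < cos \<bar>\<alpha> - \<beta>\<bar>"
    using assms by (subst cos_mono_less_eq) auto
  hence upper: "cos \<gamma> - cos \<alpha> * cos \<beta> < sin \<alpha> * sin \<beta>"
    by (simp add: cos_diff)
  have "cos (\<alpha> + \<beta>) < cos \<gamma>"
  proof (cases "\<alpha> + \<beta> \<le> pi")
    case True
    thus ?thesis using assms by (subst cos_mono_less_eq) auto
  next
    case False
    have "cos (\<alpha> + \<beta>) = cos (2 * pi - (\<alpha> + \<beta>))" by (simp add: cos_diff)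
    also have "\<dots> < cos \<gamma>" using assms False by (subst cos_mono_less_eq) auto
    finally show ?thesis .
  qed
  hence "- (sin \<alpha> * sin \<beta>) < cos \<gamma> - cos \<alpha> * cos \<beta>"
    by (simp add: cos_add)
  with upper show ?thesis by linarith
qed

text \<open>\<open>L\<^sub>1\<close> is put on the x-axis and \<open>L\<^sub>2\<close> in the xy-plane; \<open>spherical_triangle_cos_bound\<close> is what
  leaves room for \<open>L\<^sub>3\<close> strictly above that plane.\<close>
lemma spherical_triangle_vectors:
  fixes a b c \<alpha> \<beta> \<gamma> :: real
  assumes "a > 0" "b > 0" "c > 0"
    and "0 \<le> \<alpha>" "\<alpha> \<le> pi" "0 \<le> \<beta>" "\<beta> \<le> pi" "0 \<le> \<gamma>" "\<gamma> \<le> pi"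
    and "\<beta> + \<gamma> > \<alpha>" "\<alpha> + \<gamma> > \<beta>" "\<alpha> + \<beta> > \<gamma>" "\<alpha> + \<beta> + \<gamma> < 2 * pi"
  obtains L1 L2 L3 :: "real^3" where
    "L1 \<bullet> L1 = a^2" "L2 \<bullet> L2 = b^2" "L3 \<bullet> L3 = c^2"
    "L1 \<bullet> L2 = a * b * cos \<alpha>" "L1 \<bullet> L3 = a * c * cos \<beta>" "L2 \<bullet> L3 = b * c * cos \<gamma>"
    "invertible (mat_of_cols3 L1 L2 L3)"
proof -
  have sin_pos: "sin \<alpha> > 0" "sin \<beta> > 0"
    using assms by (simp_all add: sin_gt_zero)
  define x where "x = (cos \<gamma> - cos \<alpha> * cos \<beta>) / sin \<alpha>"
  have "\<bar>sin \<alpha> * x\<bar> < sin \<alpha> * sin \<beta>"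
    using spherical_triangle_cos_bound[OF assms(4-)] sin_pos by (simp add: x_def)
  hence "\<bar>x\<bar> < sin \<beta>"
    using sin_pos by (simp add: abs_mult)
  hence "x^2 < (sin \<beta>)^2"
    by (metis abs_ge_zero power2_abs power_strict_mono zero_less_numeral)
  define y where "y = sqrt ((sin \<beta>)^2 - x^2)"
  have y: "y > 0" "y^2 = (sin \<beta>)^2 - x^2"
    using \<open>x^2 < (sin \<beta>)^2\<close> by (simp_all add: y_def)
  define L1 where "L1 = (vector [a, 0, 0] :: real^3)"
  define L2 where "L2 = (vector [b * cos \<alpha>, b * sin \<alpha>, 0] :: real^3)"
  define L3 where "L3 = (vector [c * cos \<beta>, c * x, c * y] :: real^3)"
  show ?thesis
  proof (rule that)
    show "L1 \<bullet> L1 = a^2" "L1 \<bullet> L2 = a * b * cos \<alpha>" "L1 \<bullet> L3 = a * c * cos \<beta>"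
      by (simp_all add: L1_def L2_def L3_def inner_vec3 power2_eq_square)
    show "L2 \<bullet> L2 = b^2"
      by (simp add: L2_def inner_vec3) (use sin_cos_squared_add[of \<alpha>] in algebra)
    show "L3 \<bullet> L3 = c^2"
      by (simp add: L3_def inner_vec3) (use sin_cos_squared_add[of \<beta>] y(2) in algebra)
    have "L2 \<bullet> L3 = b * c * (cos \<alpha> * cos \<beta> + sin \<alpha> * x)"
      by (simp add: L2_def L3_def inner_vec3 algebra_simps)
    thus "L2 \<bullet> L3 = b * c * cos \<gamma>"
      using sin_pos by (simp add: x_def)
    show "invertible (mat_of_cols3 L1 L2 L3)"
      using assms(1-3) sin_pos y(1)
      by (simp add: invertible_det_nz det_3 mat_of_cols3_def L1_def L2_def L3_def)
  qed
qed

lemma common_lines_dataD: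
  assumes "common_lines_data N v" "a \<in> {1..N}" "b \<in> {1..N}" "a \<noteq> b"
  shows "v a b \<noteq> 0" "norm (v b a) = norm (v a b)"
proof -
  have "v a b \<noteq> 0 \<or> v b a \<noteq> 0" "norm (v a b) ^ 2 = norm (v b a) ^ 2"
    using assms unfolding common_lines_data_def by blast+
  moreover from this(2) show "norm (v b a) = norm (v a b)"
    using power2_eq_imp_eq by fastforce
  ultimately show "v a b \<noteq> 0" by auto
qed

lemma strict_spherical_triangleD:
  assumes "strict_spherical_triangle v i j k"
  defines "\<alpha> \<equiv> vangle (v i j) (v i k)" and "\<beta> \<equiv> vangle (v j i) (v j k)"
    and "\<gamma> \<equiv> vangle (v k i) (v k j)"
  shows "\<beta> + \<gamma> > \<alpha>" "\<alpha> + \<gamma> > \<beta>" "\<alpha> + \<beta> > \<gamma>" "\<alpha> + \<beta> + \<gamma> < 2 * pi"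
  using assms(1) unfolding strict_spherical_triangle_def \<alpha>_def \<beta>_def \<gamma>_def
  by (auto dest!: spec[of _ 1] simp: Let_def)

lemma strict_spherical_triangle_det2:
  assumes "strict_spherical_triangle v i j k"
    and "v i j \<noteq> 0" "v i k \<noteq> 0" "v j i \<noteq> 0" "v j k \<noteq> 0" "v k i \<noteq> 0" "v k j \<noteq> 0"
  shows "det2 (v i j) (v i k) \<noteq> 0" "det2 (v j i) (v j k) \<noteq> 0" "det2 (v k i) (v k j) \<noteq> 0"
  using strict_spherical_triangleD[OF assms(1)]
    vangle_nonneg[OF assms(2,3)] vangle_le_pi[OF assms(2,3)]
    vangle_nonneg[OF assms(4,5)] vangle_le_pi[OF assms(4,5)]
    vangle_nonneg[OF assms(6,7)] vangle_le_pi[OF assms(6,7)]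
  by (intro det2_neq_0_if_vangle_strict assms(2-); linarith)+

lemma common_line_frames_exist:
  assumes "i \<noteq> j" "i \<noteq> k" "j \<noteq> k"
    and nonzero: "v i j \<noteq> 0" "v i k \<noteq> 0" "v j i \<noteq> 0" "v j k \<noteq> 0" "v k i \<noteq> 0" "v k j \<noteq> 0"
    and norms: "norm (v j i) = norm (v i j)" "norm (v k i) = norm (v i k)" "norm (v k j) = norm (v j k)"
    and triangle: "strict_spherical_triangle v i j k"
  obtains F where "is_frame (F i)" "is_frame (F j)" "is_frame (F k)"
    "realizes_pair F v i j" "realizes_pair F v i k" "realizes_pair F v j k"
    "invertible (mat_of_cols3 (iota (F i) (v i j)) (iota (F i) (v i k)) (iota (F j) (v j k)))"
proof -
  define a b c where "a = norm (v i j)" and "b = norm (v i k)" and "c = norm (v j k)"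
  define \<alpha> \<beta> \<gamma> where "\<alpha> = vangle (v i j) (v i k)" and "\<beta> = vangle (v j i) (v j k)"
    and "\<gamma> = vangle (v k i) (v k j)"
  obtain L1 L2 L3 where L: "L1 \<bullet> L1 = a^2" "L2 \<bullet> L2 = b^2" "L3 \<bullet> L3 = c^2"
      "L1 \<bullet> L2 = a * b * cos \<alpha>" "L1 \<bullet> L3 = a * c * cos \<beta>" "L2 \<bullet> L3 = b * c * cos \<gamma>"
      "invertible (mat_of_cols3 L1 L2 L3)"
  proof (rule spherical_triangle_vectors)
    show "a > 0" "b > 0" "c > 0" using nonzero by (simp_all add: a_def b_def c_def)
    show "0 \<le> \<alpha>" "\<alpha> \<le> pi" "0 \<le> \<beta>" "\<beta> \<le> pi" "0 \<le> \<gamma>" "\<gamma> \<le> pi"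
      using nonzero by (simp_all add: \<alpha>_def \<beta>_def \<gamma>_def vangle_nonneg vangle_le_pi)
    show "\<beta> + \<gamma> > \<alpha>" "\<alpha> + \<gamma> > \<beta>" "\<alpha> + \<beta> > \<gamma>" "\<alpha> + \<beta> + \<gamma> < 2 * pi"
      using strict_spherical_triangleD[OF triangle] by (simp_all add: \<alpha>_def \<beta>_def \<gamma>_def)
  qed
  have "v i j \<bullet> v i j = a^2" "v j i \<bullet> v j i = a^2" "v i k \<bullet> v i k = b^2" "v k i \<bullet> v k i = b^2"
    "v j k \<bullet> v j k = c^2" "v k j \<bullet> v k j = c^2"
    using norms by (simp_all add: a_def b_def c_def flip: power2_norm_eq_inner)
  moreover have "v i j \<bullet> v i k = a * b * cos \<alpha>" "v j i \<bullet> v j k = a * c * cos \<beta>"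
    "v k i \<bullet> v k j = b * c * cos \<gamma>"
    using cos_vangle[OF nonzero(1,2)] cos_vangle[OF nonzero(3,4)] cos_vangle[OF nonzero(5,6)] norms
    by (simp_all add: a_def b_def c_def \<alpha>_def \<beta>_def \<gamma>_def algebra_simps)
  moreover note det = strict_spherical_triangle_det2[OF triangle nonzero]
  ultimately obtain Fi Fj Fk where
    "is_frame Fi" "iota Fi (v i j) = L1" "iota Fi (v i k) = L2"
    "is_frame Fj" "iota Fj (v j i) = L1" "iota Fj (v j k) = L3"
    "is_frame Fk" "iota Fk (v k i) = L2" "iota Fk (v k j) = L3"
    using frame_with_images[OF det(1), of L1 L2] frame_with_images[OF det(2), of L1 L3]
      frame_with_images[OF det(3), of L2 L3] L
    by (metis inner_commute)
  thus ?thesis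
    using that[of "\<lambda>n. if n = i then Fi else if n = j then Fj else Fk"] L(7) assms(1-3)
    by (simp add: realizes_pair_def)
qed

lemma generic_position_of_independent_common_lines:
  assumes "i \<noteq> j" "i \<noteq> k" "j \<noteq> k"
    and det: "det2 (v i j) (v i k) \<noteq> 0" "det2 (v j i) (v j k) \<noteq> 0" "det2 (v k i) (v k j) \<noteq> 0"
    and real: "realizes_pair F v i j" "realizes_pair F v i k" "realizes_pair F v j k"
    and indep: "invertible (mat_of_cols3 (iota (F i) (v i j)) (iota (F i) (v i k)) (iota (F j) (v j k)))"
  shows "generic_position {i, j, k} F"
proof -
  define L1 L2 L3 where "L1 = iota (F i) (v i j)" and "L2 = iota (F i) (v i k)"
    and "L3 = iota (F j) (v j k)"
  have L: "iota (F j) (v j i) = L1" "iota (F k) (v k i) = L2" "iota (F k) (v k j) = L3"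
    using real by (simp_all add: realizes_pair_def L1_def L2_def L3_def)
  have indep3: "s *\<^sub>R L1 + t *\<^sub>R L2 + u *\<^sub>R L3 = 0 \<Longrightarrow> s = 0 \<and> t = 0 \<and> u = 0" for s t u
    using mat_of_cols3_invertible_independent[OF indep] by (simp add: L1_def L2_def L3_def)
  have "L3 \<noteq> s *\<^sub>R L1 + t *\<^sub>R L2" "L2 \<noteq> s *\<^sub>R L1 + t *\<^sub>R L3" "L1 \<noteq> s *\<^sub>R L2 + t *\<^sub>R L3"
    for s t
    using indep3[of s t "-1"] indep3[of s "-1" t] indep3[of "-1" s t] by (auto simp: algebra_simps)
  hence "L3 \<notin> frame_plane (F i)" "L2 \<notin> frame_plane (F j)" "L1 \<notin> frame_plane (F k)"
    using frame_plane_in_span_pair[OF det(1), of _ "F i", folded L1_def L2_def]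
      frame_plane_in_span_pair[OF det(2), of _ "F j", unfolded L(1), folded L3_def]
      frame_plane_in_span_pair[OF det(3), of _ "F k", unfolded L(2,3)]
    by blast+
  moreover have "L1 \<in> frame_plane (F i)" "L2 \<in> frame_plane (F i)" "L3 \<in> frame_plane (F j)"
    unfolding frame_plane_def L1_def L2_def L3_def by (rule rangeI)+
  moreover have "L1 \<in> frame_plane (F j)" "L2 \<in> frame_plane (F k)" "L3 \<in> frame_plane (F k)"
    unfolding frame_plane_def L[symmetric] by (rule rangeI)+
  ultimately show ?thesis
    using assms(1-3) unfolding generic_position_def by (auto simp: Int_commute)
qed

lemma common_line_frames_congruent:
  assumes det: "det2 (v i j) (v i k) \<noteq> 0" "det2 (v j i) (v j k) \<noteq> 0" "det2 (v k i) (v k j) \<noteq> 0"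
    and F: "is_frame (F i)" "is_frame (F j)" "is_frame (F k)"
      "realizes_pair F v i j" "realizes_pair F v i k" "realizes_pair F v j k"
    and G: "is_frame (G i)" "is_frame (G j)" "is_frame (G k)"
      "realizes_pair G v i j" "realizes_pair G v i k" "realizes_pair G v j k"
    and indep: "invertible (mat_of_cols3 (iota (F i) (v i j)) (iota (F i) (v i k)) (iota (F j) (v j k)))"
  obtains A where "orthogonal_matrix A"
    "frame_act A (F i) = G i" "frame_act A (F j) = G j" "frame_act A (F k) = G k"
proof -
  have FL: "iota (F j) (v j i) = iota (F i) (v i j)" "iota (F k) (v k i) = iota (F i) (v i k)"
    "iota (F k) (v k j) = iota (F j) (v j k)"
    and GL: "iota (G j) (v j i) = iota (G i) (v i j)" "iota (G k) (v k i) = iota (G i) (v i k)"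
    "iota (G k) (v k j) = iota (G j) (v j k)"
    using F G by (simp_all add: realizes_pair_def)
  obtain A where A: "orthogonal_matrix A"
    "A *v iota (F i) (v i j) = iota (G i) (v i j)" "A *v iota (F i) (v i k) = iota (G i) (v i k)"
    "A *v iota (F j) (v j k) = iota (G j) (v j k)"
  proof (rule orthogonal_matrix_of_equal_gram3[OF indep])
    show "iota (G i) (v i j) \<bullet> iota (G j) (v j k) = iota (F i) (v i j) \<bullet> iota (F j) (v j k)"
      unfolding FL(1)[symmetric] GL(1)[symmetric] by (simp add: inner_iota F G)
    show "iota (G i) (v i k) \<bullet> iota (G j) (v j k) = iota (F i) (v i k) \<bullet> iota (F j) (v j k)"
      unfolding FL(2,3)[symmetric] GL(2,3)[symmetric] by (simp add: inner_iota F G)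
  qed (simp_all add: inner_iota F G)
  have "frame_act A (F i) = G i"
    by (rule frame_eq_if_iota_eq[OF det(1)]) (simp_all add: iota_frame_act A)
  moreover have "frame_act A (F j) = G j"
    by (rule frame_eq_if_iota_eq[OF det(2)]) (simp_all add: iota_frame_act A FL GL)
  moreover have "frame_act A (F k) = G k"
    by (rule frame_eq_if_iota_eq[OF det(3)]) (simp_all add: iota_frame_act A FL GL)
  ultimately show ?thesis using A(1) that by blast
qed

theorem proposition1:
  fixes N :: nat and v :: "nat \<Rightarrow> nat \<Rightarrow> real^2" and i j k :: nat
  assumes "common_lines_data N v"
    and "i \<in> {1..N}" and "j \<in> {1..N}" and "k \<in> {1..N}"
    and "i \<noteq> j" and "i \<noteq> k" and "j \<noteq> k"
    and "strict_spherical_triangle v i j k"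
  shows "\<exists>F :: nat \<Rightarrow> frame.
           is_frame (F i) \<and> is_frame (F j) \<and> is_frame (F k) \<and>
           generic_position {i, j, k} F \<and>
           realizes_pair F v i j \<and> realizes_pair F v i k \<and> realizes_pair F v j k \<and>
           (\<forall>G :: nat \<Rightarrow> frame.
              is_frame (G i) \<and> is_frame (G j) \<and> is_frame (G k) \<and>
              realizes_pair G v i j \<and> realizes_pair G v i k \<and> realizes_pair G v j k \<longrightarrow>
              (\<exists>A :: real^3^3. orthogonal_matrix A \<and>
                 frame_act A (F i) = G i \<and> frame_act A (F j) = G j \<and> frame_act A (F k) = G k))"
proof -
  note distinct = assms(5-7) and triangle = assms(8)
  have nonzero: "v i j \<noteq> 0" "v i k \<noteq> 0" "v j i \<noteq> 0" "v j k \<noteq> 0" "v k i \<noteq> 0" "v k j \<noteq> 0"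
    and norms: "norm (v j i) = norm (v i j)" "norm (v k i) = norm (v i k)" "norm (v k j) = norm (v j k)"
    using common_lines_dataD[OF assms(1)] assms(2-7) by (metis not_sym)+
  note det = strict_spherical_triangle_det2[OF triangle nonzero]
  obtain F where F: "is_frame (F i)" "is_frame (F j)" "is_frame (F k)"
      "realizes_pair F v i j" "realizes_pair F v i k" "realizes_pair F v j k"
    and indep: "invertible (mat_of_cols3 (iota (F i) (v i j)) (iota (F i) (v i k)) (iota (F j) (v j k)))"
    using common_line_frames_exist[OF distinct nonzero norms triangle] by blast
  have "generic_position {i, j, k} F"
    using generic_position_of_independent_common_lines[OF distinct det F(4-6) indep] .
  moreover have "\<exists>A. orthogonal_matrix A \<and>
      frame_act A (F i) = G i \<and> frame_act A (F j) = G j \<and> frame_act A (F k) = G k"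
    if "is_frame (G i)" "is_frame (G j)" "is_frame (G k)"
      "realizes_pair G v i j" "realizes_pair G v i k" "realizes_pair G v j k" for G
    using common_line_frames_congruent[OF det F that indep] by blast
  ultimately show ?thesis using F by blast
qed

end
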